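(* Let $(X,d)$ be a compact doubling metric space with $\operatorname{diam}(X,d)=1/2$ and $(\mathcal S,D_2)$ a hyperbolic filling with parameters $a\ge\lambda\ge6$. Let $\rho:\mathcal S\to(0,\infty)$ satisfy (H3'). Let $k\ge0$, $v\in\mathcal S_k$, and let $\gamma=(v_1,\dots,v_N)$ be a horizontal path of level $k+1$ with $\pi_1(v_i)\in B(\pi_1(v),3a^{-k})$ for all $i$, $\pi_1(v_1)\in B(\pi_1(v),a^{-k})$ and $\pi_1(v_N)\notin B(\pi_1(v),2a^{-k})$. Let $w$ be the parent of $v_1$. Then \[ \sum_{i=1}^{N-1}\pi^*(v_i)\wedge\pi^*(v_{i+1})\ge\max\{\pi^*(v),\pi^*(w)\}. \]
   Context: Hyperbolic filling: $X_0\subset X_1\subset\cdots$ increasing, $X_n$ maximal $a^{-n}$-separated in $X$ ($X_0=\{x_0\}$); $\mathcal S_n=\{(x,n):x\in X_n\}$, $\mathcal S=\bigcup_n\mathcal S_n$, $\pi_1(x,n)=x$, $\pi_2(x,n)=n$, $v_0=(x_0,0)$, $B_v=B(\pi_1(v),a^{-\pi_2(v)})$. Each $(x,n)$, $n\ge1$, has a fixed parent $(y,n-1)$ with $d(x,y)=\min_{z\in X_{n-1}}d(x,z)$; genealogy $g(v)=(v_0,\dots,v_k=v)$. Graph $(\mathcal S,D_2)$: edges vertex–parent and horizontal edges between distinct $(x,n),(y,n)$ with $B(x,\lambda a^{-n})\cap B(y,\lambda a^{-n})\ne\emptyset$. A horizontal path of level $k+1$ is a sequence of vertices of $\mathcal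 S_{k+1}$, consecutive ones joined by horizontal edges. For $u\in\mathcal S_k$, $\Gamma_k(u)$ is the set of horizontal paths $(u_1,\dots,u_n)$ of level $k+1$ with $\pi_1(u_1)\in B_u$ and $\pi_1(u_n)\notin B(\pi_1(u),2a^{-k})$. $\pi(u)=\prod_{w\in g(u)}\rho(w)$; $\rho^*(u)=\min\{\rho(w):\pi_2(w)=\pi_2(u),D_2(u,w)\le1\}$; $\pi^*(u)=\min\{\pi(w):\pi_2(w)=\pi_2(u),D_2(u,w)\le1\}$; for a horizontal path $\gamma=(u_1,\dots,u_N)$, $L_h(\gamma,\rho)=\sum_{j=1}^{N-1}\rho^*(u_j)\wedge\rho^*(u_{j+1})$. (H3'): for all $k\ge0$, $u\in\mathcal S_k$, $\gamma\in\Gamma_k(u)$, $L_h(\gamma,\rho)\ge1$. *)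

theory Defs
  imports "HOL-Analysis.Analysis"
begin

definition Bx :: "'a::metric_space set \<Rightarrow> 'a \<Rightarrow> real \<Rightarrow> 'a set" where
  "Bx X x r = {y \<in> X. dist x y < r}"

definition doubling :: "'a::metric_space set \<Rightarrow> bool" where
  "doubling X \<longleftrightarrow> (\<exists>C::nat. \<forall>x\<in>X. \<forall>r>0. \<exists>F. finite F \<and> card F \<le> C \<and> F \<subseteq> X \<and>
      Bx X x (2*r) \<subseteq> (\<Union>y\<in>F. Bx X y r))"

definition separated :: "'a::metric_space set \<Rightarrow> real \<Rightarrow> bool" where
  "separated A e \<longleftrightarrow> (\<forall>x\<in>A. \<forall>y\<in>A. x \<noteq> y \<longrightarrow> dist x y \<ge> e)"

definition maximal_separated :: "'a::metric_space set \<Rightarrow> 'a set \<Rightarrow> real \<Rightarrow> bool" where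
  "maximal_separated X A e \<longleftrightarrow> A \<subseteq> X \<and> separated A e \<and>
      (\<forall>B. A \<subseteq> B \<and> B \<subseteq> X \<and> separated B e \<longrightarrow> B = A)"

definition hf_S :: "(nat \<Rightarrow> 'a set) \<Rightarrow> ('a \<times> nat) set" where
  "hf_S Xs = {(x,n). x \<in> Xs n}"

definition hf_level :: "(nat \<Rightarrow> 'a set) \<Rightarrow> nat \<Rightarrow> ('a \<times> nat) set" where
  "hf_level Xs n = {(x,m). x \<in> Xs n \<and> m = n}"

definition hyperbolic_filling ::
  "'a::metric_space set \<Rightarrow> real \<Rightarrow> 'a \<Rightarrow> (nat \<Rightarrow> 'a set) \<Rightarrow> ('a \<times> nat \<Rightarrow> 'a \<times> nat) \<Rightarrow> bool" where
  "hyperbolic_filling X a x0 Xs par \<longleftrightarrow>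
     Xs 0 = {x0} \<and> x0 \<in> X \<and>
     (\<forall>n. Xs n \<subseteq> Xs (Suc n)) \<and>
     (\<forall>n. maximal_separated X (Xs n) (a powi (- int n))) \<and>
     (\<forall>x n. x \<in> Xs (Suc n) \<longrightarrow>
        (\<exists>y. par (x, Suc n) = (y, n) \<and> y \<in> Xs n \<and> (\<forall>z\<in>Xs n. dist x y \<le> dist x z)))"

definition hf_hedge :: "'a::metric_space set \<Rightarrow> real \<Rightarrow> real \<Rightarrow> (nat \<Rightarrow> 'a set) \<Rightarrow>
    'a \<times> nat \<Rightarrow> 'a \<times> nat \<Rightarrow> bool" where
  "hf_hedge X a lam Xs u w \<longleftrightarrow> u \<in> hf_S Xs \<and> w \<in> hf_S Xs \<and> snd u = snd w \<and> u \<noteq> w \<and>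
     Bx X (fst u) (lam * a powi (- int (snd u))) \<inter> Bx X (fst w) (lam * a powi (- int (snd u))) \<noteq> {}"

definition hf_edge :: "'a::metric_space set \<Rightarrow> real \<Rightarrow> real \<Rightarrow> (nat \<Rightarrow> 'a set) \<Rightarrow>
    ('a \<times> nat \<Rightarrow> 'a \<times> nat) \<Rightarrow> 'a \<times> nat \<Rightarrow> 'a \<times> nat \<Rightarrow> bool" where
  "hf_edge X a lam Xs par u w \<longleftrightarrow>
     (u \<in> hf_S Xs \<and> snd u \<ge> 1 \<and> w = par u) \<or> (w \<in> hf_S Xs \<and> snd w \<ge> 1 \<and> u = par w) \<or>
     hf_hedge X a lam Xs u w"

text \<open>Vertices w of the same level as u with D_2(u,w) \<le> 1.\<close>
definition hf_nbhd :: "'a::metric_space set \<Rightarrow> real \<Rightarrow> real \<Rightarrow> (nat \<Rightarrow> 'a set) \<Rightarrow>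
    ('a \<times> nat \<Rightarrow> 'a \<times> nat) \<Rightarrow> 'a \<times> nat \<Rightarrow> ('a \<times> nat) set" where
  "hf_nbhd X a lam Xs par u =
     {w \<in> hf_S Xs. snd w = snd u \<and> (w = u \<or> hf_edge X a lam Xs par u w)}"

definition hf_pi :: "('a \<times> nat \<Rightarrow> 'a \<times> nat) \<Rightarrow> ('a \<times> nat \<Rightarrow> real) \<Rightarrow> 'a \<times> nat \<Rightarrow> real" where
  "hf_pi par rho u = (\<Prod>i\<in>{0..snd u}. rho ((par ^^ i) u))"

definition hf_rho_star :: "'a::metric_space set \<Rightarrow> real \<Rightarrow> real \<Rightarrow> (nat \<Rightarrow> 'a set) \<Rightarrow>
    ('a \<times> nat \<Rightarrow> 'a \<times> nat) \<Rightarrow> ('a \<times> nat \<Rightarrow> real) \<Rightarrow> 'a \<times> nat \<Rightarrow> real" where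
  "hf_rho_star X a lam Xs par rho u = Inf (rho ` hf_nbhd X a lam Xs par u)"

definition hf_pi_star :: "'a::metric_space set \<Rightarrow> real \<Rightarrow> real \<Rightarrow> (nat \<Rightarrow> 'a set) \<Rightarrow>
    ('a \<times> nat \<Rightarrow> 'a \<times> nat) \<Rightarrow> ('a \<times> nat \<Rightarrow> real) \<Rightarrow> 'a \<times> nat \<Rightarrow> real" where
  "hf_pi_star X a lam Xs par rho u = Inf (hf_pi par rho ` hf_nbhd X a lam Xs par u)"

definition horizontal_path :: "'a::metric_space set \<Rightarrow> real \<Rightarrow> real \<Rightarrow> (nat \<Rightarrow> 'a set) \<Rightarrow>
    nat \<Rightarrow> ('a \<times> nat) list \<Rightarrow> bool" where
  "horizontal_path X a lam Xs m \<gamma> \<longleftrightarrow> \<gamma> \<noteq> [] \<and> set \<gamma> \<subseteq> hf_level Xs m \<and>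
     (\<forall>i. Suc i < length \<gamma> \<longrightarrow> hf_hedge X a lam Xs (\<gamma> ! i) (\<gamma> ! Suc i))"

definition Gamma :: "'a::metric_space set \<Rightarrow> real \<Rightarrow> real \<Rightarrow> (nat \<Rightarrow> 'a set) \<Rightarrow>
    nat \<Rightarrow> 'a \<times> nat \<Rightarrow> ('a \<times> nat) list set" where
  "Gamma X a lam Xs k u = {\<gamma>. horizontal_path X a lam Xs (Suc k) \<gamma> \<and>
     fst (hd \<gamma>) \<in> Bx X (fst u) (a powi (- int k)) \<and>
     fst (last \<gamma>) \<notin> Bx X (fst u) (2 * a powi (- int k))}"

definition L_h :: "'a::metric_space set \<Rightarrow> real \<Rightarrow> real \<Rightarrow> (nat \<Rightarrow> 'a set) \<Rightarrow>
    ('a \<times> nat \<Rightarrow> 'a \<times> nat) \<Rightarrow> ('a \<times> nat \<Rightarrow> real) \<Rightarrow> ('a \<times> nat) list \<Rightarrow> real" where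
  "L_h X a lam Xs par rho \<gamma> = (\<Sum>j<length \<gamma> - 1.
      min (hf_rho_star X a lam Xs par rho (\<gamma> ! j)) (hf_rho_star X a lam Xs par rho (\<gamma> ! Suc j)))"

definition H3' :: "'a::metric_space set \<Rightarrow> real \<Rightarrow> real \<Rightarrow> (nat \<Rightarrow> 'a set) \<Rightarrow>
    ('a \<times> nat \<Rightarrow> 'a \<times> nat) \<Rightarrow> ('a \<times> nat \<Rightarrow> real) \<Rightarrow> bool" where
  "H3' X a lam Xs par rho \<longleftrightarrow> (\<forall>k. \<forall>u\<in>hf_level Xs k. \<forall>\<gamma>\<in>Gamma X a lam Xs k u.
      L_h X a lam Xs par rho \<gamma> \<ge> 1)"

end

theory Submission
  imports Defs
begin

text \<open>Let M = max{\<pi>*(v), \<pi>*(w)}. A D_2-neighbour u of a path vertex v_i lies within 2 a^-k of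
  v_i, so its parent lies within 6 a^-k \<le> \<lambda> a^-k of \<pi>_1(v), as does \<pi>_1(w); hence the parent of u
  is a D_2-neighbour of both v and w, and \<pi>(u) = \<rho>(u) \<pi>(parent u) \<ge> \<rho>*(v_i) M. Taking the
  infimum over u gives \<rho>*(v_i) M \<le> \<pi>*(v_i). As \<gamma> \<in> \<Gamma>_k(v), (H3') yields M \<le> L_h(\<gamma>, \<rho>) M, which
  is termwise at most the sum on the left.\<close>

lemma hf_level_iff: "u \<in> hf_level Xs n \<longleftrightarrow> fst u \<in> Xs n \<and> snd u = n"
  by (cases u) (auto simp: hf_level_def)

lemma hf_S_iff: "u \<in> hf_S Xs \<longleftrightarrow> fst u \<in> Xs (snd u)"
  by (cases u) (auto simp: hf_S_def)

lemma hf_level_subset_S: "hf_level Xs n \<subseteq> hf_S Xs"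
  by (auto simp: hf_level_iff hf_S_iff)

lemma maximal_separated_close:
  assumes "maximal_separated X A e" "x \<in> X" "e > 0"
  obtains z where "z \<in> A" "dist x z < e"
proof (rule ccontr)
  assume "\<not> thesis"
  with that have far: "\<forall>z\<in>A. e \<le> dist x z" by force
  with assms(1,2) have "separated (insert x A) e"
    unfolding maximal_separated_def separated_def by (auto simp: dist_commute)
  with assms(1,2) have "x \<in> A" unfolding maximal_separated_def by blast
  with far assms(3) show False by fastforce
qed

lemma hyperbolic_filling_subset:
  "hyperbolic_filling X a x0 Xs par \<Longrightarrow> Xs n \<subseteq> X"
  unfolding hyperbolic_filling_def maximal_separated_def by blast

lemma parent_in_level:
  assumes "hyperbolic_filling X a x0 Xs par" "u \<in> hf_level Xs (Suc n)"
  shows "par u \<in> hf_level Xs n" "\<forall>z\<in>Xs n. dist (fst u) (fst (par u)) \<le> dist (fst u) z"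
  using assms unfolding hyperbolic_filling_def by (cases u; fastforce simp: hf_level_iff)+

lemma dist_parent_less:
  assumes HF: "hyperbolic_filling X a x0 Xs par" and "a > 0" and u: "u \<in> hf_level Xs (Suc n)"
  shows "dist (fst u) (fst (par u)) < a powi (- int n)"
proof -
  have "maximal_separated X (Xs n) (a powi (- int n))"
    using HF unfolding hyperbolic_filling_def by blast
  moreover have "fst u \<in> X"
    using u hyperbolic_filling_subset[OF HF] by (auto simp: hf_level_iff)
  ultimately obtain z where "z \<in> Xs n" "dist (fst u) z < a powi (- int n)"
    using maximal_separated_close \<open>a > 0\<close> by (metis zero_less_power_int)
  with parent_in_level(2)[OF HF u] show ?thesis by fastforce
qed

lemma dist_to_parent_less:
  assumes "hyperbolic_filling X a x0 Xs par" "a > 0" "u \<in> hf_level Xs (Suc n)"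
    and "dist y (fst u) < a powi (- int n)"
  shows "dist y (fst (par u)) < 2 * a powi (- int n)"
  using dist_parent_less[OF assms(1-3)] assms(4) dist_triangle[of y "fst (par u)" "fst u"] by linarith

lemma funpow_parent_in_S:
  assumes HF: "hyperbolic_filling X a x0 Xs par" and u: "u \<in> hf_S Xs"
  shows "i \<le> snd u \<Longrightarrow> (par ^^ i) u \<in> hf_S Xs \<and> snd ((par ^^ i) u) = snd u - i"
proof (induction i)
  case 0
  with u show ?case by simp
next
  case (Suc i)
  then have "(par ^^ i) u \<in> hf_level Xs (Suc (snd u - Suc i))"
    by (auto simp: hf_level_iff hf_S_iff Suc_diff_Suc)
  from parent_in_level(1)[OF HF this] show ?case
    using hf_level_subset_S by (fastforce simp: hf_level_iff)
qed

lemma hf_pi_pos: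
  assumes "hyperbolic_filling X a x0 Xs par" "\<forall>u\<in>hf_S Xs. rho u > 0" "u \<in> hf_S Xs"
  shows "hf_pi par rho u > 0"
  unfolding hf_pi_def by (rule prod_pos) (use funpow_parent_in_S[OF assms(1,3)] assms(2) in auto)

lemma hf_pi_parent:
  assumes "snd (par u) = n" "snd u = Suc n"
  shows "hf_pi par rho u = rho u * hf_pi par rho (par u)"
  unfolding hf_pi_def assms prod.atLeast0_atMost_Suc_shift
  by (simp add: funpow_Suc_right del: funpow.simps)

text \<open>Parent edges always change the level, so they never join two vertices of hf_nbhd.\<close>
lemma hf_nbhd_iff:
  assumes "hyperbolic_filling X a x0 Xs par"
  shows "w \<in> hf_nbhd X a lam Xs par u \<longleftrightarrow> (w = u \<and> u \<in> hf_S Xs) \<or> hf_hedge X a lam Xs u w"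
proof -
  have level_change: "snd (par p) \<noteq> snd p" if "p \<in> hf_S Xs" "snd p \<ge> 1" for p
    using parent_in_level(1)[OF assms, of p "snd p - 1"] that by (auto simp: hf_level_iff hf_S_iff)
  show ?thesis
    unfolding hf_nbhd_def hf_edge_def
    by (auto dest: level_change simp: hf_hedge_def)
qed

lemma hf_hedge_dist:
  assumes "hf_hedge X a lam Xs u w"
  shows "dist (fst u) (fst w) < 2 * lam * a powi (- int (snd u))"
proof -
  from assms obtain y where "dist (fst u) y < lam * a powi (- int (snd u))"
    "dist (fst w) y < lam * a powi (- int (snd u))"
    unfolding hf_hedge_def Bx_def by auto
  then show ?thesis using dist_triangle[of "fst u" "fst w" y] dist_commute[of y "fst w"] by linarith
qed

lemma hf_nbhd_if_common_point:
  assumes "p \<in> hf_level Xs n" "q \<in> hf_level Xs n" "y \<in> X"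
    "dist (fst p) y < lam * a powi (- int n)" "dist (fst q) y < lam * a powi (- int n)"
  shows "p \<in> hf_nbhd X a lam Xs par q"
proof -
  have "y \<in> Bx X (fst q) (lam * a powi (- int n)) \<inter> Bx X (fst p) (lam * a powi (- int n))"
    using assms(3-5) by (simp add: Bx_def dist_commute)
  then have "p = q \<or> hf_hedge X a lam Xs q p"
    using assms(1,2) unfolding hf_hedge_def by (auto simp: hf_level_iff hf_S_iff)
  then show ?thesis
    using assms(1,2) unfolding hf_nbhd_def hf_edge_def by (auto simp: hf_level_iff hf_S_iff)
qed

lemma hf_nbhd_self: "q \<in> hf_S Xs \<Longrightarrow> q \<in> hf_nbhd X a lam Xs par q"
  by (simp add: hf_nbhd_def)

lemma hf_pi_star_le:
  assumes "hyperbolic_filling X a x0 Xs par" "\<forall>u\<in>hf_S Xs. rho u > 0"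
    "p \<in> hf_nbhd X a lam Xs par q"
  shows "hf_pi_star X a lam Xs par rho q \<le> hf_pi par rho p"
  unfolding hf_pi_star_def
proof (rule cINF_lower[OF _ assms(3)])
  show "bdd_below (hf_pi par rho ` hf_nbhd X a lam Xs par q)"
    using hf_pi_pos[OF assms(1,2)] unfolding hf_nbhd_def
    by (intro bdd_belowI[where m = 0]) (auto intro: less_imp_le)
qed

lemma hf_pi_star_nonneg:
  assumes "hyperbolic_filling X a x0 Xs par" "\<forall>u\<in>hf_S Xs. rho u > 0" "q \<in> hf_S Xs"
  shows "0 \<le> hf_pi_star X a lam Xs par rho q"
  unfolding hf_pi_star_def
proof (rule cINF_greatest)
  show "hf_nbhd X a lam Xs par q \<noteq> {}" using hf_nbhd_self[OF assms(3)] by blast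
qed (use hf_pi_pos[OF assms(1,2)] in \<open>auto simp: hf_nbhd_def intro: less_imp_le\<close>)

lemma hf_rho_star_mult_le_pi_star:
  assumes HF: "hyperbolic_filling X a x0 Xs par" and pos: "\<forall>u\<in>hf_S Xs. rho u > 0"
    and q: "q \<in> hf_level Xs (Suc n)" and "0 \<le> M"
    and parent_bound: "\<And>u. u \<in> hf_nbhd X a lam Xs par q \<Longrightarrow> M \<le> hf_pi par rho (par u)"
  shows "hf_rho_star X a lam Xs par rho q * M \<le> hf_pi_star X a lam Xs par rho q"
  unfolding hf_pi_star_def
proof (rule cINF_greatest)
  show "hf_nbhd X a lam Xs par q \<noteq> {}"
    using q hf_nbhd_self hf_level_subset_S by blast
next
  fix u assume u: "u \<in> hf_nbhd X a lam Xs par q"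
  then have uS: "u \<in> hf_S Xs" and "snd u = Suc n"
    using q by (auto simp: hf_nbhd_def hf_level_iff)
  then have "u \<in> hf_level Xs (Suc n)" by (simp add: hf_level_iff hf_S_iff)
  then have pi_u: "hf_pi par rho u = rho u * hf_pi par rho (par u)"
    using parent_in_level(1)[OF HF] \<open>snd u = Suc n\<close> by (intro hf_pi_parent) (auto simp: hf_level_iff)
  have "hf_rho_star X a lam Xs par rho q \<le> rho u"
    unfolding hf_rho_star_def using pos u
    by (intro cINF_lower bdd_belowI[where m = 0]) (auto simp: hf_nbhd_def intro: less_imp_le)
  then show "hf_rho_star X a lam Xs par rho q * M \<le> hf_pi par rho u"
    unfolding pi_u using parent_bound[OF u] pos uS \<open>0 \<le> M\<close>
    by (intro mult_mono) (auto intro: less_imp_le)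
qed

lemma parent_of_nbhd_in_nbhd:
  assumes HF: "hyperbolic_filling X a x0 Xs par" and "6 \<le> lam" "lam \<le> a"
    and p: "p \<in> hf_level Xs k" and q: "q \<in> hf_level Xs (Suc k)"
    and u: "u \<in> hf_nbhd X a lam Xs par q" and "y \<in> X"
    and yq: "dist y (fst q) < 3 * a powi (- int k)"
    and yp: "dist y (fst p) < lam * a powi (- int k)"
  shows "par u \<in> hf_nbhd X a lam Xs par p"
proof -
  define r where "r = a powi (- int k)"
  have "a > 0" "r > 0" using assms(2,3) by (auto simp: r_def)
  have u_level: "u \<in> hf_level Xs (Suc k)"
    using u q by (auto simp: hf_nbhd_def hf_level_iff hf_S_iff)
  have next_scale: "a powi (- int (Suc k)) = r / a"
    unfolding r_def power_int_minus power_int_of_nat by (simp add: field_simps)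
  have edge_scale: "lam * a powi (- int (Suc k)) \<le> r"
    unfolding next_scale using \<open>lam \<le> a\<close> \<open>a > 0\<close> \<open>r > 0\<close>
    by (simp add: field_simps mult_right_mono)
  have uq: "dist (fst u) (fst q) < 2 * r"
  proof (cases "u = q")
    case False
    with u have "hf_hedge X a lam Xs q u" using hf_nbhd_iff[OF HF] by blast
    from hf_hedge_dist[OF this] q have "dist (fst q) (fst u) < 2 * (lam * a powi (- int (Suc k)))"
      by (simp add: hf_level_iff)
    with edge_scale show ?thesis by (simp add: dist_commute)
  qed (use \<open>r > 0\<close> in simp)
  have "dist (fst u) (fst (par u)) < r"
    using dist_parent_less[OF HF \<open>a > 0\<close> u_level] by (simp add: r_def)
  with uq yq have "dist (fst (par u)) y < 6 * r"
    using dist_triangle[of "fst (par u)" y "fst u"] dist_triangle[of "fst u" y "fst q"]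
      dist_commute[of "fst u" "fst (par u)"] dist_commute[of y "fst q"]
    unfolding r_def by linarith
  also have "\<dots> \<le> lam * r" using \<open>6 \<le> lam\<close> \<open>r > 0\<close> by simp
  finally have "dist (fst (par u)) y < lam * r" .
  moreover have "dist (fst p) y < lam * r" using yp by (simp add: r_def dist_commute)
  ultimately show ?thesis
    using hf_nbhd_if_common_point[OF parent_in_level(1)[OF HF u_level] p \<open>y \<in> X\<close>]
    by (simp add: r_def)
qed

lemma sum_min_scaled_ge:
  fixes f g :: "nat \<Rightarrow> real"
  assumes "1 \<le> (\<Sum>j<n. min (f j) (f (Suc j)))" "0 \<le> M" "\<And>i. i \<le> n \<Longrightarrow> f i * M \<le> g i"
  shows "M \<le> (\<Sum>j<n. min (g j) (g (Suc j)))"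
proof -
  have "M \<le> (\<Sum>j<n. min (f j) (f (Suc j))) * M"
    using mult_right_mono[OF assms(1,2)] by simp
  also have "\<dots> = (\<Sum>j<n. min (f j * M) (f (Suc j) * M))"
    using \<open>0 \<le> M\<close> by (simp add: sum_distrib_right min_mult_distrib_right)
  also have "\<dots> \<le> (\<Sum>j<n. min (g j) (g (Suc j)))"
    using assms(3) by (intro sum_mono min.mono) auto
  finally show ?thesis .
qed

lemma sum_min_pi_star_ge:
  assumes HF: "hyperbolic_filling X a x0 Xs par" and pos: "\<forall>u\<in>hf_S Xs. rho u > 0"
    and path: "horizontal_path X a lam Xs (Suc k) \<gamma>"
    and L_h: "1 \<le> L_h X a lam Xs par rho \<gamma>" and "0 \<le> M"
    and parent_bound: "\<And>i u. i < length \<gamma> \<Longrightarrow> u \<in> hf_nbhd X a lam Xs par (\<gamma> ! i) \<Longrightarrow>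
      M \<le> hf_pi par rho (par u)"
  shows "M \<le> (\<Sum>i<length \<gamma> - 1. min (hf_pi_star X a lam Xs par rho (\<gamma> ! i))
                                       (hf_pi_star X a lam Xs par rho (\<gamma> ! Suc i)))"
proof (rule sum_min_scaled_ge[OF L_h[unfolded L_h_def] \<open>0 \<le> M\<close>])
  fix i assume "i \<le> length \<gamma> - 1"
  have "\<gamma> \<noteq> []" and path_level: "set \<gamma> \<subseteq> hf_level Xs (Suc k)"
    using path unfolding horizontal_path_def by auto
  with \<open>i \<le> length \<gamma> - 1\<close> have i: "i < length \<gamma>" by (cases \<gamma>) auto
  then have "\<gamma> ! i \<in> hf_level Xs (Suc k)" using path_level nth_mem by blast
  from hf_rho_star_mult_le_pi_star[OF HF pos this \<open>0 \<le> M\<close> parent_bound[OF i]]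
  show "hf_rho_star X a lam Xs par rho (\<gamma> ! i) * M \<le> hf_pi_star X a lam Xs par rho (\<gamma> ! i)" .
qed

theorem lemma3p18:
  fixes X :: "'a::metric_space set" and a lam :: real and x0 :: 'a
    and Xs :: "nat \<Rightarrow> 'a set" and par :: "'a \<times> nat \<Rightarrow> 'a \<times> nat"
    and rho :: "'a \<times> nat \<Rightarrow> real" and k :: nat and v w :: "'a \<times> nat"
    and \<gamma> :: "('a \<times> nat) list"
  assumes "compact X" and "doubling X" and "diameter X = 1/2"
    and "hyperbolic_filling X a x0 Xs par"
    and "a \<ge> lam" and "lam \<ge> 6"
    and "\<forall>u\<in>hf_S Xs. rho u > 0"
    and "H3' X a lam Xs par rho"
    and "v \<in> hf_level Xs k"
    and "horizontal_path X a lam Xs (Suc k) \<gamma>"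
    and "\<forall>u\<in>set \<gamma>. fst u \<in> Bx X (fst v) (3 * a powi (- int k))"
    and "fst (hd \<gamma>) \<in> Bx X (fst v) (a powi (- int k))"
    and "fst (last \<gamma>) \<notin> Bx X (fst v) (2 * a powi (- int k))"
    and "w = par (hd \<gamma>)"
  shows "(\<Sum>i<length \<gamma> - 1. min (hf_pi_star X a lam Xs par rho (\<gamma> ! i))
                                    (hf_pi_star X a lam Xs par rho (\<gamma> ! Suc i)))
         \<ge> max (hf_pi_star X a lam Xs par rho v) (hf_pi_star X a lam Xs par rho w)"
proof -
  note HF = assms(4) and pos = assms(7)
  define M where "M = max (hf_pi_star X a lam Xs par rho v) (hf_pi_star X a lam Xs par rho w)"
  have "a > 0" using assms(5,6) by linarith
  have "\<gamma> \<in> Gamma X a lam Xs k v" unfolding Gamma_def using assms(10,12,13) by blast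
  then have L_h: "1 \<le> L_h X a lam Xs par rho \<gamma>" using assms(8,9) unfolding H3'_def by blast
  have "fst v \<in> X" using assms(9) hyperbolic_filling_subset[OF HF] by (auto simp: hf_level_iff)
  have "v \<in> hf_S Xs" using assms(9) hf_level_subset_S by blast
  then have "0 \<le> M" unfolding M_def using hf_pi_star_nonneg[OF HF pos] by (simp add: le_max_iff_disj)
  have "\<gamma> \<noteq> []" and path_level: "set \<gamma> \<subseteq> hf_level Xs (Suc k)"
    using assms(10) unfolding horizontal_path_def by auto
  then have hd_level: "hd \<gamma> \<in> hf_level Xs (Suc k)" by auto
  have w_level: "w \<in> hf_level Xs k"
    unfolding assms(14) by (rule parent_in_level(1)[OF HF hd_level])
  have "dist (fst v) (fst w) < 2 * a powi (- int k)"
    unfolding assms(14) using assms(12)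
    by (intro dist_to_parent_less[OF HF \<open>a > 0\<close> hd_level]) (simp add: Bx_def)
  moreover have "2 * a powi (- int k) \<le> lam * a powi (- int k)"
    using assms(6) \<open>a > 0\<close> by (intro mult_right_mono) auto
  ultimately have vw: "dist (fst v) (fst w) < lam * a powi (- int k)" by linarith
  have vv: "dist (fst v) (fst v) < lam * a powi (- int k)" using assms(6) \<open>a > 0\<close> by simp
  show ?thesis
    unfolding M_def[symmetric]
  proof (rule sum_min_pi_star_ge[OF HF pos assms(10) L_h \<open>0 \<le> M\<close>])
    fix i u assume "i < length \<gamma>" and u: "u \<in> hf_nbhd X a lam Xs par (\<gamma> ! i)"
    then have "\<gamma> ! i \<in> set \<gamma>" by simp
    then have q: "\<gamma> ! i \<in> hf_level Xs (Suc k)" and vq: "dist (fst v) (fst (\<gamma> ! i)) < 3 * a powi (- int k)"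
      using path_level assms(11) by (auto simp: Bx_def)
    note parent_near = parent_of_nbhd_in_nbhd[OF HF assms(6,5) _ q u \<open>fst v \<in> X\<close> vq]
    show "M \<le> hf_pi par rho (par u)"
      unfolding M_def using hf_pi_star_le[OF HF pos parent_near[OF assms(9) vv]]
        hf_pi_star_le[OF HF pos parent_near[OF w_level vw]] by simp
  qed
qed

end
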